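(* Let $B_2$ be the closed unit ball of a real Hilbert space (or $\mathbb{R}^d$ with the Euclidean norm), let $R(w)=-\log(1-\|w\|^2)$ for $\|w\|<1$, let $x_1,\dots,x_n\in B_2$ and $y_1,\dots,y_n\in\{0,1\}$ be arbitrary, and let $$g_t(w)=-\mathbf{1}\{y_t=1\}\log(1+\langle w,x_t\rangle)-\mathbf{1}\{y_t=0\}\log(1-\langle w,x_t\rangle).$$ Let $\eta>0$ and let $w_1,w_2,\dots$ be the Follow-the-Regularized-Leader iterates $w_{t+1}=\arg\min_{w\in B_2}\sum_{s=1}^t\langle\nabla g_s(w_s),w\rangle+\eta^{-1}R(w)$ (with $w_1=\arg\min R=0$). Then for every $t$, $$\|\nabla g_t(w_t)\|^*_{w_t}\le3,$$ where for $w$ in the open unit ball, $\|h\|^*_w=\sqrt{h^{\top}(\nabla^2R(w))^{-1}h}$ is the local dual norm. *)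

theory Defs
  imports "HOL-Analysis.Analysis"
begin

definition Rreg :: "'a::real_inner \<Rightarrow> real" where
  "Rreg w = - ln (1 - (norm w)^2)"

definition grad :: "('a::real_inner \<Rightarrow> real) \<Rightarrow> 'a \<Rightarrow> 'a" where
  "grad f w = (THE G. (f has_derivative (\<lambda>h. G \<bullet> h)) (at w))"

definition hess :: "('a::real_inner \<Rightarrow> real) \<Rightarrow> 'a \<Rightarrow> 'a \<Rightarrow> 'a" where
  "hess f w = frechet_derivative (grad f) (at w)"

definition local_dual_norm :: "'a::real_inner \<Rightarrow> 'a \<Rightarrow> real" where
  "local_dual_norm w h = sqrt (h \<bullet> (inv (hess Rreg w) h))"

definition logloss :: "'a::real_inner \<Rightarrow> nat \<Rightarrow> 'a \<Rightarrow> real" where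
  "logloss x y w = - (if y = 1 then ln (1 + w \<bullet> x) else 0)
                   - (if y = 0 then ln (1 - w \<bullet> x) else 0)"

end

theory Submission imports Defs begin

text \<open>
  At \<open>w\<close> with \<open>q = \<parallel>w\<parallel>\<^sup>2 < 1\<close> the Hessian of the barrier is
  \<open>(2/(1-q)) I + (4/(1-q)\<^sup>2) w w\<^sup>T\<close>, whose inverse is explicit by the Sherman--Morrison formula:
  \<open>h\<^sup>T (\<nabla>\<^sup>2R)\<^sup>-\<^sup>1 h = (1-q)/2 (\<parallel>h\<parallel>\<^sup>2 - 2 (w\<^sup>Th)\<^sup>2/(1+q))\<close>.
  Each log loss is \<open>v \<mapsto> -ln (1 + v\<^sup>Ta)\<close> with \<open>a = \<plusminus>x\<close>, so its gradient is \<open>-a/(1 + w\<^sup>Ta)\<close>.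
  Writing \<open>s = w\<^sup>Ta\<close>, the squared local dual norm is then at most
  \<open>(1-q)(1+q-2s\<^sup>2) / (2(1+q)(1+s)\<^sup>2) \<le> 2/(1+q)\<close>, because
  \<open>4(1+s)\<^sup>2 - (1-q)(1+q-2s\<^sup>2) = (2(1+s) - (1-q))\<^sup>2 + 2(1-q)(1+s)\<^sup>2\<close>.
  Hence the bound holds at every point of the open ball, in particular at the FTRL iterates.
\<close>

lemma grad_eqI:
  assumes "(f has_derivative (\<lambda>h. G \<bullet> h)) (at w)"
  shows "grad f w = G"
  unfolding grad_def
proof (rule the_equality)
  show "(f has_derivative (\<lambda>h. G \<bullet> h)) (at w)" by (rule assms)
  fix G' assume "(f has_derivative (\<lambda>h. G' \<bullet> h)) (at w)"
  from has_derivative_unique[OF this assms] have "\<And>h. G' \<bullet> h = G \<bullet> h" by metis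
  from this[of "G' - G"] have "(G' - G) \<bullet> (G' - G) = 0" by (simp add: inner_diff_left)
  then show "G' = G" by simp
qed

lemma grad_neg_ln_inner:
  fixes a w :: "'a::real_inner"
  assumes "c + w \<bullet> a > 0"
  shows "grad (\<lambda>v. - ln (c + v \<bullet> a)) w = (- 1 / (c + w \<bullet> a)) *\<^sub>R a"
proof (rule grad_eqI)
  have "((\<lambda>v. c + v \<bullet> a) has_derivative (\<lambda>h. 0 + h \<bullet> a)) (at w)"
    by (intro has_derivative_add has_derivative_const has_derivative_inner_left has_derivative_ident)
  then have "((\<lambda>v. - ln (c + v \<bullet> a)) has_derivative (\<lambda>h. - ((0 + h \<bullet> a) * inverse (c + w \<bullet> a)))) (at w)"
    by (intro has_derivative_minus DERIV_compose_FDERIV[OF DERIV_ln] assms)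
  then show "((\<lambda>v. - ln (c + v \<bullet> a)) has_derivative (\<lambda>h. ((- 1 / (c + w \<bullet> a)) *\<^sub>R a) \<bullet> h)) (at w)"
    by (rule has_derivative_eq_rhs) (auto simp: inner_commute field_simps fun_eq_iff)
qed

lemma logloss_eq_neg_ln_inner:
  assumes "y \<in> {0, 1}"
  obtains a where "norm a = norm x" and "logloss x y = (\<lambda>v. - ln (1 + v \<bullet> a))"
proof (cases "y = 1")
  case True
  then show ?thesis by (intro that[of x]) (auto simp: logloss_def)
next
  case False
  with assms have "y = 0" by auto
  then show ?thesis by (intro that[of "- x"]) (auto simp: logloss_def)
qed

lemma Rreg_eq: "Rreg = (\<lambda>v. - ln (1 - v \<bullet> v))"
  by (simp add: Rreg_def power2_norm_eq_inner fun_eq_iff)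

lemma inner_self_less_one: "norm w < 1 \<Longrightarrow> w \<bullet> w < 1"
  by (simp add: abs_square_less_1 flip: power2_norm_eq_inner)

lemma grad_Rreg:
  fixes w :: "'a::real_inner"
  assumes "norm w < 1"
  shows "grad Rreg w = (2 / (1 - w \<bullet> w)) *\<^sub>R w"
proof (unfold Rreg_eq, rule grad_eqI)
  have "((\<lambda>v. 1 - v \<bullet> v) has_derivative (\<lambda>h. 0 - (w \<bullet> h + h \<bullet> w))) (at w)"
    by (intro has_derivative_diff has_derivative_const has_derivative_inner has_derivative_ident)
  then have "((\<lambda>v. - ln (1 - v \<bullet> v)) has_derivative
      (\<lambda>h. - ((0 - (w \<bullet> h + h \<bullet> w)) * inverse (1 - w \<bullet> w)))) (at w)"
    using inner_self_less_one[OF assms]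
    by (intro has_derivative_minus DERIV_compose_FDERIV[OF DERIV_ln]) auto
  then show "((\<lambda>v. - ln (1 - v \<bullet> v)) has_derivative (\<lambda>h. ((2 / (1 - w \<bullet> w)) *\<^sub>R w) \<bullet> h)) (at w)"
    by (rule has_derivative_eq_rhs) (auto simp: inner_commute field_simps fun_eq_iff)
qed

lemma hess_Rreg:
  fixes w :: "'a::real_inner"
  assumes "norm w < 1"
  shows "hess Rreg w =
    (\<lambda>h. (2 / (1 - w \<bullet> w)) *\<^sub>R h + (4 / (1 - w \<bullet> w)^2 * (w \<bullet> h)) *\<^sub>R w)"
proof -
  have q: "1 - w \<bullet> w \<noteq> 0" using inner_self_less_one[OF assms] by simp
  have "((\<lambda>v. 1 - v \<bullet> v) has_derivative (\<lambda>h. 0 - (w \<bullet> h + h \<bullet> w))) (at w)"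
    by (intro has_derivative_diff has_derivative_const has_derivative_inner has_derivative_ident)
  from has_derivative_scaleR[OF has_derivative_divide[OF has_derivative_const this q] has_derivative_ident]
  have "((\<lambda>v. (2 / (1 - v \<bullet> v)) *\<^sub>R v) has_derivative
      (\<lambda>h. (2 / (1 - w \<bullet> w)) *\<^sub>R h + (4 / (1 - w \<bullet> w)^2 * (w \<bullet> h)) *\<^sub>R w)) (at w)"
    by (rule has_derivative_eq_rhs)
      (use q in \<open>auto simp: fun_eq_iff inner_commute field_simps power2_eq_square\<close>)
  then have "(grad Rreg has_derivative
      (\<lambda>h. (2 / (1 - w \<bullet> w)) *\<^sub>R h + (4 / (1 - w \<bullet> w)^2 * (w \<bullet> h)) *\<^sub>R w)) (at w)"
    by (rule has_derivative_transform_within_open[where s = "ball 0 1"])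
      (use assms in \<open>auto simp: grad_Rreg\<close>)
  then show ?thesis unfolding hess_def by (rule frechet_derivative_at[symmetric])
qed

lemma inv_scaleR_plus_rank_one:
  fixes w h :: "'a::real_inner"
  assumes "\<alpha> > 0" "\<beta> \<ge> 0"
  shows "inv (\<lambda>z. \<alpha> *\<^sub>R z + (\<beta> * (w \<bullet> z)) *\<^sub>R w) h
    = (1 / \<alpha>) *\<^sub>R (h - (\<beta> * (w \<bullet> h) / (\<alpha> + \<beta> * (w \<bullet> w))) *\<^sub>R w)"
proof (rule inv_f_eq)
  let ?H = "\<lambda>z. \<alpha> *\<^sub>R z + (\<beta> * (w \<bullet> z)) *\<^sub>R w"
  have d: "\<alpha> + \<beta> * (w \<bullet> w) > 0" using assms by (simp add: add_pos_nonneg)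
  show "inj ?H"
  proof (rule injI)
    fix z z' assume "?H z = ?H z'"
    then have "?H (z - z') = 0" by (simp add: algebra_simps inner_diff_right)
    then have "(z - z') \<bullet> ?H (z - z') = 0" by simp
    then have "\<alpha> * ((z - z') \<bullet> (z - z')) + \<beta> * (w \<bullet> (z - z'))^2 = 0"
      by (simp add: inner_add_right inner_commute power2_eq_square)
    with assms have "\<alpha> * ((z - z') \<bullet> (z - z')) = 0"
      by (smt (verit) inner_ge_zero mult_nonneg_nonneg zero_le_power2)
    with assms show "z = z'" by simp
  qed
  define c where "c = \<beta> * (w \<bullet> h) / (\<alpha> + \<beta> * (w \<bullet> w))"
  have "w \<bullet> ((1 / \<alpha>) *\<^sub>R (h - c *\<^sub>R w)) = (w \<bullet> h) / (\<alpha> + \<beta> * (w \<bullet> w))"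
  proof -
    have "w \<bullet> h - c * (w \<bullet> w) = \<alpha> * (w \<bullet> h) / (\<alpha> + \<beta> * (w \<bullet> w))"
      using d by (simp add: c_def field_simps)
    then show ?thesis using assms by (simp add: inner_diff_right)
  qed
  then have "\<beta> * (w \<bullet> ((1 / \<alpha>) *\<^sub>R (h - c *\<^sub>R w))) = c" by (simp add: c_def)
  with assms show "?H ((1 / \<alpha>) *\<^sub>R (h - c *\<^sub>R w)) = h" by simp
qed
lemma inner_inv_hess_Rreg:
  fixes w h :: "'a::real_inner"
  assumes "norm w < 1"
  shows "h \<bullet> inv (hess Rreg w) h = (1 - w \<bullet> w) / 2 * (h \<bullet> h - 2 * (w \<bullet> h)^2 / (1 + w \<bullet> w))"
proof -
  define q where "q = w \<bullet> w"
  define \<alpha> where "\<alpha> = 2 / (1 - q)"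
  define \<beta> where "\<beta> = 4 / (1 - q)^2"
  have q: "0 \<le> q" "q < 1" using inner_self_less_one[OF assms] by (auto simp: q_def)
  have "\<alpha> + \<beta> * q = 2 * (1 + q) / (1 - q)^2"
    using q by (simp add: \<alpha>_def \<beta>_def field_simps) algebra
  then have \<beta>: "\<beta> / (\<alpha> + \<beta> * q) = 2 / (1 + q)"
    using q by (simp add: \<beta>_def field_simps)
  have "h \<bullet> inv (\<lambda>z. \<alpha> *\<^sub>R z + (\<beta> * (w \<bullet> z)) *\<^sub>R w) h
      = (1 / \<alpha>) * (h \<bullet> h - \<beta> / (\<alpha> + \<beta> * q) * (w \<bullet> h)^2)"
  proof -
    have "\<alpha> > 0" "\<beta> \<ge> 0" using q by (simp_all add: \<alpha>_def \<beta>_def)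
    then show ?thesis
      by (simp add: inv_scaleR_plus_rank_one q_def inner_diff_right power2_eq_square)
        (simp add: inner_commute field_simps)
  qed
  then show ?thesis
    unfolding hess_Rreg[OF assms] q_def[symmetric] \<alpha>_def[symmetric] \<beta>_def[symmetric] \<beta>
    by (simp add: \<alpha>_def)
qed

lemma log_barrier_quadratic_bound:
  fixes q r s :: real
  assumes "0 \<le> q" "q < 1" "r \<le> 1" "1 + s > 0"
  shows "(1 - q) / 2 * (r - 2 * s^2 / (1 + q)) \<le> 2 * (1 + s)^2 / (1 + q)"
proof -
  have "(1 - q) * ((1 + q) * r - 2 * s^2) \<le> (1 - q) * (1 + q - 2 * s^2)"
    using assms by (intro mult_left_mono) auto
  also have "\<dots> = 4 * (1 + s)^2 - (2 * (1 + s) - (1 - q))^2 - 2 * (1 - q) * (1 + s)^2"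
    by (simp add: power2_eq_square algebra_simps)
  also have "\<dots> \<le> 4 * (1 + s)^2"
    using assms by (smt (verit) mult_nonneg_nonneg zero_le_power2)
  finally have "(1 - q) * ((1 + q) * r - 2 * s^2) / (2 * (1 + q)) \<le> 4 * (1 + s)^2 / (2 * (1 + q))"
    using assms by (intro divide_right_mono) auto
  then show ?thesis
    using assms by (simp add: field_simps)
qed

lemma local_dual_norm_grad_neg_ln_inner:
  fixes w a :: "'a::real_inner"
  assumes w: "norm w < 1" and a: "norm a \<le> 1"
  shows "local_dual_norm w (grad (\<lambda>v. - ln (1 + v \<bullet> a)) w) \<le> sqrt 2"
proof -
  define s where "s = w \<bullet> a"
  define q where "q = w \<bullet> w"
  have q: "0 \<le> q" "q < 1" using inner_self_less_one[OF w] by (auto simp: q_def)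
  have "\<bar>s\<bar> \<le> norm w * norm a" unfolding s_def by (rule Cauchy_Schwarz_ineq2)
  also have "\<dots> < 1" using w a by (smt (verit) mult_left_le norm_ge_zero)
  finally have s: "1 + s > 0" by simp
  have aa: "a \<bullet> a \<le> 1" using a by (simp add: abs_square_le_1 flip: power2_norm_eq_inner)
  define h where "h = grad (\<lambda>v. - ln (1 + v \<bullet> a)) w"
  define k where "k = 1 / (1 + s)"
  have "h = (- k) *\<^sub>R a"
    using s by (simp add: h_def k_def s_def grad_neg_ln_inner)
  then have "h \<bullet> h = k^2 * (a \<bullet> a)" "(w \<bullet> h)^2 = k^2 * s^2"
    by (simp_all add: s_def power2_eq_square)
  then have "h \<bullet> inv (hess Rreg w) h = k^2 * ((1 - q) / 2 * (a \<bullet> a - 2 * s^2 / (1 + q)))"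
    by (simp add: inner_inv_hess_Rreg[OF w] q_def[symmetric] algebra_simps)
  also have "\<dots> \<le> k^2 * (2 * (1 + s)^2 / (1 + q))"
    by (intro mult_left_mono log_barrier_quadratic_bound q aa s) simp
  also have "\<dots> \<le> 2" using q s by (simp add: k_def field_simps)
  finally show ?thesis unfolding local_dual_norm_def h_def[symmetric] by simp
qed

theorem lemma3:
  fixes x :: "nat \<Rightarrow> 'a::{real_inner, complete_space}"
    and y :: "nat \<Rightarrow> nat"
    and w :: "nat \<Rightarrow> 'a"
    and \<eta> :: real
    and n :: nat
  assumes eta: "\<eta> > 0"
    and xs: "\<forall>t\<in>{1..n}. norm (x t) \<le> 1"
    and ys: "\<forall>t\<in>{1..n}. y t \<in> {0, 1}"
    and w1: "w 1 = 0"
    and ftrl: "\<forall>t\<in>{1..<n}. norm (w (t + 1)) < 1 \<and>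
       (\<forall>v. norm v < 1 \<longrightarrow>
          (\<Sum>s=1..t. grad (logloss (x s) (y s)) (w s) \<bullet> w (t + 1)) + Rreg (w (t + 1)) / \<eta>
          \<le> (\<Sum>s=1..t. grad (logloss (x s) (y s)) (w s) \<bullet> v) + Rreg v / \<eta>)"
  shows "\<forall>t\<in>{1..n}. local_dual_norm (w t) (grad (logloss (x t) (y t)) (w t)) \<le> 3"
proof
  fix t assume t: "t \<in> {1..n}"
  have w_t: "norm (w t) < 1"
  proof (cases "t = 1")
    case True
    with w1 show ?thesis by simp
  next
    case False
    with t have "t - 1 \<in> {1..<n}" and "t - 1 + 1 = t" by auto
    with ftrl show ?thesis by metis
  qed
  obtain a where "norm a = norm (x t)" and "logloss (x t) (y t) = (\<lambda>v. - ln (1 + v \<bullet> a))"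
    using ys t by (meson logloss_eq_neg_ln_inner)
  with w_t xs t have "local_dual_norm (w t) (grad (logloss (x t) (y t)) (w t)) \<le> sqrt 2"
    by (simp add: local_dual_norm_grad_neg_ln_inner)
  also have "sqrt 2 \<le> (3::real)"
    by (rule real_le_lsqrt) auto
  finally show "local_dual_norm (w t) (grad (logloss (x t) (y t)) (w t)) \<le> 3" .
qed

end
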